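(* Let $R$ be a finitely generated unital $K$-algebra with filtration $\mathcal{F}=\{V_i\}_{i\ge1}$, let $e\in R$ be a full idempotent and $S:=eRe$. Then, with respect to the filtration $\mathcal{G}=\{eV_ie\}_{i\ge1}$ of $S$, one has $\mathrm{h}_{\mathrm{alg}}(S,\mathcal{G})\le\mathrm{h}_{\mathrm{alg}}(R,\mathcal{F})$.
   Context: An idempotent $e$ of $R$ is full if $ReR=R$. A filtration of $R$ is an increasing family of subspaces $V_i$ with union $R$ and $V_iV_j\subseteq V_{i+j}$, with finite-dimensional quotients $V_i/V_{i-1}$. $\mathrm{h}_{\mathrm{alg}}(R,\mathcal{F})=0$ if $R$ is finite-dimensional and otherwise $\limsup_n\frac1n\log\dim(V_n/V_{n-1})$. *)

theory Defs
  imports Complex_Main "HOL-Library.Liminf_Limsup" "HOL-Library.Extended_Real"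
begin

definition is_algebra :: "('k::field \<Rightarrow> 'a::ring_1 \<Rightarrow> 'a) \<Rightarrow> bool" where
  "is_algebra scale \<longleftrightarrow> Vector_Spaces.vector_space scale \<and>
     (\<forall>c x y. scale c (x * y) = scale c x * y \<and> scale c (x * y) = x * scale c y)"

definition fin_gen_algebra :: "('k::field \<Rightarrow> 'a::ring_1 \<Rightarrow> 'a) \<Rightarrow> bool" where
  "fin_gen_algebra scale \<longleftrightarrow> (\<exists>G. finite G \<and>
     (\<lambda>T. module.subspace scale T \<and> 1 \<in> T \<and> (\<forall>x\<in>T. \<forall>y\<in>T. x * y \<in> T)) hull G = UNIV)"

definition full_idempotent :: "('k::field \<Rightarrow> 'a::ring_1 \<Rightarrow> 'a) \<Rightarrow> 'a \<Rightarrow> bool" where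
  "full_idempotent scale e \<longleftrightarrow> e * e = e \<and>
     module.span scale {x * e * y | x y. True} = UNIV"

text \<open>Filtration indexed by i \<ge> 1; V_0 is taken to be {0}.\<close>
definition filt0 :: "(nat \<Rightarrow> 'a::zero set) \<Rightarrow> nat \<Rightarrow> 'a set" where
  "filt0 V i = (if i = 0 then {0} else V i)"

definition finite_dim :: "('k::field \<Rightarrow> 'a::ring_1 \<Rightarrow> 'a) \<Rightarrow> 'a set \<Rightarrow> bool" where
  "finite_dim scale A \<longleftrightarrow> (\<exists>B. finite B \<and> A \<subseteq> module.span scale B)"

definition is_filtration ::
  "('k::field \<Rightarrow> 'a::ring_1 \<Rightarrow> 'a) \<Rightarrow> 'a set \<Rightarrow> (nat \<Rightarrow> 'a set) \<Rightarrow> bool" where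
  "is_filtration scale A V \<longleftrightarrow>
     (\<forall>i\<ge>1. module.subspace scale (V i) \<and> V i \<subseteq> A) \<and>
     (\<forall>i\<ge>1. V i \<subseteq> V (Suc i)) \<and>
     (\<Union>i\<in>{1..}. V i) = A \<and>
     (\<forall>i\<ge>1. \<forall>j\<ge>1. \<forall>x\<in>V i. \<forall>y\<in>V j. x * y \<in> V (i + j)) \<and>
     (\<forall>i\<ge>1. \<exists>B. finite B \<and> V i \<subseteq> module.span scale (filt0 V (i - 1) \<union> B))"

text \<open>dim (V_n / V_{n-1}) = dim V_n - dim V_{n-1} (all V_i finite-dimensional).\<close>
definition qdim :: "('k::field \<Rightarrow> 'a::ring_1 \<Rightarrow> 'a) \<Rightarrow> (nat \<Rightarrow> 'a set) \<Rightarrow> nat \<Rightarrow> nat" where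
  "qdim scale V n = vector_space.dim scale (V n) - vector_space.dim scale (filt0 V (n - 1))"

definition h_alg ::
  "('k::field \<Rightarrow> 'a::ring_1 \<Rightarrow> 'a) \<Rightarrow> 'a set \<Rightarrow> (nat \<Rightarrow> 'a set) \<Rightarrow> ereal" where
  "h_alg scale A V = (if finite_dim scale A then 0 else
     limsup (\<lambda>n. if qdim scale V n = 0 then (-\<infinity>)
                 else ereal (ln (real (qdim scale V n)) / real n)))"

end

theory Submission
  imports Defs "HOL-Real_Asymp.Real_Asymp"
begin

text \<open>The sandwich map \<open>x \<mapsto> e x e\<close> is linear, so \<open>dim (eV_n e / eV_{n-1} e) \<le> dim V_n\<close>,
  and \<open>dim V_n\<close> is the sum of the quotient dimensions \<open>dim (V_i / V_{i-1})\<close>, \<open>i \<le> n\<close>. If these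
  quotients are eventually at most \<open>exp (c n)\<close> with \<open>c \<ge> 0\<close>, their partial sums are at most
  \<open>C n exp (c n)\<close>, and the polynomial factor does not change the exponential growth rate.
  The requirement \<open>c \<ge> 0\<close> is met because an infinite-dimensional \<open>R\<close> has infinitely many
  nonzero quotients, so \<open>h_alg(R) \<ge> 0\<close>.\<close>

definition exp_growth_rate :: "(nat \<Rightarrow> nat) \<Rightarrow> ereal" where
  "exp_growth_rate d =
     limsup (\<lambda>n. if d n = 0 then -\<infinity> else ereal (ln (real (d n)) / real n))"

lemma h_alg_eq_exp_growth_rate:
  "h_alg scale A V = (if finite_dim scale A then 0 else exp_growth_rate (qdim scale V))"
  unfolding h_alg_def exp_growth_rate_def ..

lemma exp_growth_rate_mono:
  assumes "\<forall>\<^sub>F n in sequentially. d n \<le> d' n"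
  shows "exp_growth_rate d \<le> exp_growth_rate d'"
  unfolding exp_growth_rate_def
proof (rule Limsup_mono)
  show "\<forall>\<^sub>F n in sequentially.
          (if d n = 0 then -\<infinity> else ereal (ln (real (d n)) / real n))
          \<le> (if d' n = 0 then -\<infinity> else ereal (ln (real (d' n)) / real n))"
    using assms by eventually_elim (auto intro: divide_right_mono)
qed

lemma exp_growth_rate_nonneg:
  assumes "\<exists>\<^sub>F n in sequentially. d n \<noteq> 0"
  shows "0 \<le> exp_growth_rate d"
proof (rule ccontr)
  assume "\<not> 0 \<le> exp_growth_rate d"
  then have "\<forall>\<^sub>F n in sequentially.
               (if d n = 0 then -\<infinity> else ereal (ln (real (d n)) / real n)) < 0"
    by (intro Limsup_lessD) (simp add: exp_growth_rate_def)
  then have "\<forall>\<^sub>F n in sequentially. d n = 0"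
  proof eventually_elim
    case (elim n)
    show ?case
    proof (rule ccontr)
      assume "d n \<noteq> 0"
      then have "0 \<le> ln (real (d n)) / real n"
        by simp
      with elim \<open>d n \<noteq> 0\<close> show False
        by simp
    qed
  qed
  with assms show False
    by (simp add: frequently_def)
qed

lemma eventually_le_exp_if_exp_growth_rate_less:
  assumes "exp_growth_rate d < ereal c"
  shows "\<forall>\<^sub>F n in sequentially. real (d n) \<le> exp (c * real n)"
proof -
  have "\<forall>\<^sub>F n in sequentially.
          (if d n = 0 then -\<infinity> else ereal (ln (real (d n)) / real n)) < ereal c"
    using assms by (intro Limsup_lessD) (simp add: exp_growth_rate_def)
  with eventually_gt_at_top[of 0] show ?thesis
  proof eventually_elim
    case (elim n)
    show ?case
    proof (cases "d n = 0")
      case False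
      with elim have "ln (real (d n)) < c * real n"
        by (simp add: field_simps)
      have "real (d n) = exp (ln (real (d n)))"
        using False by simp
      also have "\<dots> \<le> exp (c * real n)"
        using \<open>ln (real (d n)) < c * real n\<close> by simp
      finally show ?thesis .
    qed simp
  qed
qed

lemma exp_growth_rate_le_if_eventually_le:
  assumes C: "C > 0"
    and bound: "\<forall>\<^sub>F n in sequentially. real (d n) \<le> C * real n * exp (c * real n)"
  shows "exp_growth_rate d \<le> ereal c"
proof -
  have "\<forall>\<^sub>F n in sequentially.
          (if d n = 0 then -\<infinity> else ereal (ln (real (d n)) / real n))
          \<le> ereal ((ln C + ln (real n)) / real n + c)"
    using bound eventually_gt_at_top[of 0]
  proof eventually_elim
    case (elim n)
    show ?case
    proof (cases "d n = 0")
      case False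
      then have "ln (real (d n)) \<le> ln (C * real n * exp (c * real n))"
        using elim by simp
      also have "\<dots> = ln C + ln (real n) + c * real n"
        using C elim by (simp add: ln_mult)
      finally show ?thesis
        using False elim by (simp add: field_simps)
    qed simp
  qed
  then have "exp_growth_rate d \<le> Limsup sequentially (\<lambda>n. ereal ((ln C + ln (real n)) / real n + c))"
    unfolding exp_growth_rate_def by (rule Limsup_mono)
  also have "\<dots> = ereal c"
  proof (intro lim_imp_Limsup trivial_limit_sequentially tendsto_ereal)
    show "(\<lambda>n. (ln C + ln (real n)) / real n + c) \<longlonglongrightarrow> c"
      by real_asymp
  qed
  finally show ?thesis .
qed

lemma partial_sums_eventually_le_exp:
  assumes incr: "\<And>n. D (Suc n) \<le> D n + d (Suc n)"
    and bound: "\<forall>\<^sub>F n in sequentially. real (d n) \<le> exp (c * real n)"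
    and c: "0 \<le> c"
  obtains C where "C > 0" "\<forall>\<^sub>F n in sequentially. real (D n) \<le> C * real n * exp (c * real n)"
proof -
  obtain N where N: "\<And>n. n \<ge> N \<Longrightarrow> real (d n) \<le> exp (c * real n)"
    using bound unfolding eventually_sequentially by blast
  have sum_bound: "real (D n) \<le> real (D N) + real n * exp (c * real n)" if "n \<ge> N" for n
    using that
  proof (induction n rule: dec_induct)
    case (step n)
    have "real (D (Suc n)) \<le> real (D n) + real (d (Suc n))"
      using incr[of n] by linarith
    also have "\<dots> \<le> real (D N) + real n * exp (c * real n) + exp (c * real (Suc n))"
      using step.IH N[of "Suc n"] step.hyps by simp
    also have "\<dots> \<le> real (D N) + real (Suc n) * exp (c * real (Suc n))"
      using c by (simp add: algebra_simps mult_left_mono)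
    finally show ?case .
  qed simp
  have "real (D n) \<le> (real (D N) + 1) * real n * exp (c * real n)" if "n \<ge> max N 1" for n
  proof -
    have "1 * 1 \<le> real n * exp (c * real n)"
      using that c by (intro mult_mono) auto
    then have "real (D N) \<le> real (D N) * (real n * exp (c * real n))"
      by (simp add: mult_le_cancel_left1)
    then show ?thesis
      using sum_bound[of n] that by (simp add: algebra_simps)
  qed
  then have "\<forall>\<^sub>F n in sequentially. real (D n) \<le> (real (D N) + 1) * real n * exp (c * real n)"
    unfolding eventually_sequentially by blast
  then show ?thesis
    by (rule that[rotated]) simp
qed

lemma exp_growth_rate_le_of_increments:
  assumes step: "\<And>n. D (Suc n) \<le> D n + d (Suc n)"
    and nonneg: "0 \<le> exp_growth_rate d"
  shows "exp_growth_rate D \<le> exp_growth_rate d"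
proof (rule dense_ge)
  fix y assume less: "exp_growth_rate d < y"
  show "exp_growth_rate D \<le> y"
  proof (cases y)
    case (real c)
    have "0 \<le> c"
      using order.strict_trans1[OF nonneg less] real by simp
    moreover have "\<forall>\<^sub>F n in sequentially. real (d n) \<le> exp (c * real n)"
      using less real by (simp add: eventually_le_exp_if_exp_growth_rate_less)
    ultimately obtain C where "C > 0"
      "\<forall>\<^sub>F n in sequentially. real (D n) \<le> C * real n * exp (c * real n)"
      using partial_sums_eventually_le_exp step by blast
    then show ?thesis
      using real exp_growth_rate_le_if_eventually_le by blast
  qed (use less in auto)
qed

context vector_space
begin

lemma dim_image_le:
  assumes "module_hom scale scale f" and "X \<subseteq> span W" and "finite W"
  shows "dim (f ` X) \<le> dim X"
proof -
  interpret module_hom scale scale f by fact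
  obtain B where B: "B \<subseteq> X" "independent B" "X \<subseteq> span B" "card B = dim X"
    using basis_exists by blast
  have "finite B"
    using independent_span_bound[OF assms(3) B(2)] B(1) assms(2) by auto
  have "f ` X \<subseteq> f ` span B"
    using B(3) by (rule image_mono)
  also have "\<dots> = span (f ` B)"
    using span_image by simp
  finally have "dim (f ` X) \<le> card (f ` B)"
    using dim_le_card \<open>finite B\<close> by blast
  also have "\<dots> \<le> card B"
    using card_image_le \<open>finite B\<close> by blast
  finally show ?thesis
    using B(4) by simp
qed

lemma subset_span_if_dim_le:
  assumes "X \<subseteq> Y" and "Y \<subseteq> span W" and "finite W" and "dim Y \<le> dim X"
  shows "Y \<subseteq> span X"
proof -
  obtain A where A: "A \<subseteq> X" "independent A" "X \<subseteq> span A" "card A = dim X"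
    using basis_exists by blast
  obtain B where B: "A \<subseteq> B" "B \<subseteq> Y" "independent B" "Y \<subseteq> span B"
    using maximal_independent_subset_extend[of A Y] A assms(1) by blast
  have "finite B"
    using independent_span_bound[OF assms(3) B(3)] B(2) assms(2) by auto
  have "card B \<le> card A"
    using basis_card_eq_dim[OF B(2,4,3)] A(4) assms(4) by simp
  with card_mono[OF \<open>finite B\<close> B(1)] have "card A = card B"
    by simp
  then have "A = B"
    using card_subset_eq[OF \<open>finite B\<close> B(1)] by blast
  then show ?thesis
    using A(1) B(4) span_mono by blast
qed

end

lemma module_hom_sandwich:
  assumes "is_algebra scale"
  shows "module_hom scale scale (\<lambda>x. a * x * b)"
proof -
  have "vector_space scale"
    using assms by (simp add: is_algebra_def)
  then have "module scale"
    by (simp add: vector_space_def module_def)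
  moreover have "scale c (a * x * b) = a * scale c x * b" for c x
  proof -
    have "scale c (a * x * b) = scale c (a * x) * b" and "scale c (a * x) = a * scale c x"
      using assms unfolding is_algebra_def by blast+
    then show ?thesis
      by simp
  qed
  ultimately show ?thesis
    by (simp add: module_hom_iff algebra_simps)
qed

lemma finite_dim_image:
  assumes "module_hom scale scale f" and "finite_dim scale X"
  shows "finite_dim scale (f ` X)"
proof -
  interpret module_hom scale scale f by fact
  obtain W where "finite W" "X \<subseteq> module.span scale W"
    using assms(2) by (auto simp: finite_dim_def)
  then have "f ` X \<subseteq> module.span scale (f ` W)"
    using span_image by auto
  with \<open>finite W\<close> show ?thesis
    unfolding finite_dim_def by blast
qed

lemma is_filtration_mono:
  assumes "is_filtration scale A V" and "1 \<le> i" and "i \<le> j"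
  shows "V i \<subseteq> V j"
  using assms(3)
proof (induction j rule: dec_induct)
  case (step n)
  with assms(1,2) show ?case
    unfolding is_filtration_def by (meson order_trans dual_order.trans)
qed simp

lemma is_filtration_finite_dim:
  assumes "vector_space scale" and "is_filtration scale A V" and "1 \<le> n"
  shows "finite_dim scale (V n)"
proof -
  interpret vector_space scale by fact
  have extend: "\<exists>B. finite B \<and> V i \<subseteq> span (filt0 V (i - 1) \<union> B)" if "1 \<le> i" for i
    using assms(2) that unfolding is_filtration_def by blast
  show ?thesis
    using assms(3)
  proof (induction n rule: dec_induct)
    case base
    obtain B where "finite B" "V 1 \<subseteq> span ({0} \<union> B)"
      using extend[of 1] by (auto simp: filt0_def)
    then show ?case
      unfolding finite_dim_def by (intro exI[of _ "{0} \<union> B"]) simp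
  next
    case (step n)
    obtain B where "finite B" "V (Suc n) \<subseteq> span (V n \<union> B)"
      using extend[of "Suc n"] \<open>1 \<le> n\<close> by (auto simp: filt0_def)
    moreover obtain W where "finite W" "V n \<subseteq> span W"
      using step.IH unfolding finite_dim_def by auto
    moreover have "V n \<union> B \<subseteq> span (W \<union> B)"
      using \<open>V n \<subseteq> span W\<close> span_mono[of W "W \<union> B"] span_superset[of "W \<union> B"] by auto
    then have "span (V n \<union> B) \<subseteq> span (W \<union> B)"
      by (intro span_minimal subspace_span)
    ultimately show ?case
      unfolding finite_dim_def by (intro exI[of _ "W \<union> B"]) auto
  qed
qed

lemma finite_dim_if_qdim_eventually_zero:
  assumes vs: "vector_space scale" and F: "is_filtration scale A V"
    and zero: "\<forall>\<^sub>F n in sequentially. qdim scale V n = 0"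
  shows "finite_dim scale A"
proof -
  interpret vector_space scale by fact
  have "\<forall>\<^sub>F n in sequentially. 1 \<le> n \<and> qdim scale V n = 0"
    using zero eventually_ge_at_top[of 1] by eventually_elim simp
  then obtain N where N: "\<And>n. N \<le> n \<Longrightarrow> 1 \<le> n \<and> qdim scale V n = 0"
    unfolding eventually_sequentially by blast
  have "1 \<le> N"
    using N[of N] by simp
  have fd: "\<exists>W. finite W \<and> V n \<subseteq> span W" if "1 \<le> n" for n
    using is_filtration_finite_dim[OF vs F that] by (simp add: finite_dim_def)
  obtain W where "finite W" "V N \<subseteq> span W"
    using fd \<open>1 \<le> N\<close> by blast
  have stable: "V n \<subseteq> span (V N)" if "N \<le> n" for n
    using that
  proof (induction n rule: dec_induct)
    case base
    show ?case by (rule span_superset)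
  next
    case (step n)
    obtain U where "finite U" "V (Suc n) \<subseteq> span U"
      using fd[of "Suc n"] by auto
    moreover have "V n \<subseteq> V (Suc n)"
      using is_filtration_mono[OF F] \<open>1 \<le> N\<close> step.hyps by simp
    moreover have "dim (V (Suc n)) \<le> dim (V n)"
      using N[of n] N[of "Suc n"] step.hyps by (simp add: qdim_def filt0_def)
    ultimately have "V (Suc n) \<subseteq> span (V n)"
      using subset_span_if_dim_le by blast
    also have "\<dots> \<subseteq> span (V N)"
      using span_minimal[OF step.IH subspace_span] .
    finally show ?case .
  qed
  have "A \<subseteq> span (V N)"
  proof
    fix x assume "x \<in> A"
    moreover have "(\<Union>i\<in>{1..}. V i) = A"
      using F unfolding is_filtration_def by (elim conjE)
    ultimately obtain i where "1 \<le> i" "x \<in> V i"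
      by auto
    show "x \<in> span (V N)"
    proof (cases "i \<le> N")
      case True
      then have "V i \<subseteq> V N"
        using is_filtration_mono[OF F \<open>1 \<le> i\<close>] by simp
      with \<open>x \<in> V i\<close> show ?thesis
        using span_superset by blast
    next
      case False
      with \<open>x \<in> V i\<close> stable[of i] show ?thesis
        by (simp add: subset_iff)
    qed
  qed
  also have "span (V N) \<subseteq> span W"
    using span_minimal[OF \<open>V N \<subseteq> span W\<close> subspace_span] .
  finally have "A \<subseteq> span W" .
  with \<open>finite W\<close> show ?thesis
    unfolding finite_dim_def by (intro exI[of _ W]) simp
qed

lemma qdim_image_le_dim:
  assumes "vector_space scale" and "module_hom scale scale f"
    and "is_filtration scale A V" and "1 \<le> n"
  shows "qdim scale (\<lambda>i. f ` V i) n \<le> vector_space.dim scale (V n)"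
proof -
  interpret vector_space scale by fact
  obtain W where "finite W" "V n \<subseteq> span W"
    using is_filtration_finite_dim[OF assms(1,3,4)] by (auto simp: finite_dim_def)
  then have "dim (f ` V n) \<le> dim (V n)"
    using dim_image_le[OF assms(2)] by blast
  then show ?thesis
    unfolding qdim_def by simp
qed

theorem proposition4p10:
  fixes scale :: "'k::field \<Rightarrow> 'a::ring_1 \<Rightarrow> 'a"
    and V :: "nat \<Rightarrow> 'a set"
    and e :: 'a
  assumes "is_algebra scale"
    and "fin_gen_algebra scale"
    and "is_filtration scale UNIV V"
    and "full_idempotent scale e"
  shows "h_alg scale {e * x * e | x. True} (\<lambda>i. {e * v * e | v. v \<in> V i})
           \<le> h_alg scale UNIV V"
proof -
  define f where "f x = e * x * e" for x
  have vs: "vector_space scale"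
    using assms(1) by (simp add: is_algebra_def)
  have hom: "module_hom scale scale f"
    unfolding f_def using module_hom_sandwich[OF assms(1)] .
  have S: "{e * x * e | x. True} = range f" and G: "(\<lambda>i. {e * v * e | v. v \<in> V i}) = (\<lambda>i. f ` V i)"
    by (auto simp: f_def)
  show ?thesis
  proof (cases "finite_dim scale (UNIV :: 'a set)")
    case True
    moreover have "finite_dim scale (range f)"
      using finite_dim_image[OF hom True] .
    ultimately show ?thesis
      unfolding S G h_alg_eq_exp_growth_rate by simp
  next
    case False
    let ?D = "\<lambda>n. vector_space.dim scale (filt0 V n)"
    have "\<exists>\<^sub>F n in sequentially. qdim scale V n \<noteq> 0"
      using False finite_dim_if_qdim_eventually_zero[OF vs assms(3)] by (auto simp: frequently_def)
    then have nonneg: "0 \<le> exp_growth_rate (qdim scale V)"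
      by (rule exp_growth_rate_nonneg)
    have "exp_growth_rate (qdim scale (\<lambda>i. f ` V i)) \<le> exp_growth_rate ?D"
      using qdim_image_le_dim[OF vs hom assms(3)]
      by (intro exp_growth_rate_mono) (auto simp: filt0_def eventually_sequentially)
    also have "\<dots> \<le> exp_growth_rate (qdim scale V)"
      using nonneg by (intro exp_growth_rate_le_of_increments) (simp add: qdim_def filt0_def)
    finally show ?thesis
      using False nonneg unfolding S G h_alg_eq_exp_growth_rate by simp
  qed
qed

end
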